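(* Let $K$ be a field, $S=K[[x_1,\dots,x_n]]$ with maximal ideal $\mathfrak{m}$, let $E$ be the $S$-module described in the context, and fix a term order $\prec$ on $E$. Let $N\subset E$ be an $S$-submodule. If $0\neq\eta\in N:_E\mathfrak{m}$, then $\mathrm{LT}_\prec(\eta)\in \langle \mathrm{LT}_\prec(N)\rangle:_E\mathfrak{m}$; that is, for every $i=1,\dots,n$, either $x_i\,\mathrm{LT}_\prec(\eta)=0$ or $x_i\,\mathrm{LT}_\prec(\eta)\in\mathrm{LT}_\prec(N)$.
   Context: $E=K[x_1^{-1},\dots,x_n^{-1}]\cdot\frac{1}{x_1\cdots x_n}$ is the $K$-vector space with basis the "terms" $\frac{1}{x^{\alpha+1}}=\frac{1}{x_1^{\alpha_1+1}\cdots x_n^{\alpha_n+1}}$, $\alpha\in\mathbb{Z}_{\ge0}^n$, with $S$-module structure given by $x^{\gamma}\cdot\frac{1}{x^{\beta+1}}=\frac{1}{x^{\beta-\gamma+1}}$ if $\beta-\gamma\in\mathbb{Z}^n_{\ge0}$ and $0$ otherwise, extended bilinearly (this is the injective hull of $K$ as an $S$-module). A term order on $E$ is a total order $\prec$ on the set of terms such that (1) $\frac{1}{x^{1}}\preceq\frac{1}{x^{\alpha+1}}$ for all $\alpha$ (where $x^1=x_1\cdots x_n$), and (2) $\frac{1}{x^{\alpha+1}}\prec\frac{1}{x^{\beta+1}}$ implies $\frac{1}{x^{\alpha+\gamma+1}}\prec\frac{1}{x^{\beta+\gamma+1}}$ for all $\alpha,\beta,\gamma\in\mathbb{Z}^n_{\ge0}$.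 For $0\ne\eta\in E$, $\mathrm{LT}_\prec(\eta)$ is the $\prec$-largest term occurring in $\eta$ with nonzero coefficient. For a subset $N\subset E$, $\mathrm{LT}_\prec(N)=\{\mathrm{LT}_\prec(\eta)\mid 0\ne\eta\in N\}$, and $\langle\mathrm{LT}_\prec(N)\rangle$ is the $S$-submodule it generates. For an $S$-submodule $N\subset E$, $N:_E\mathfrak{m}=\{\eta\in E\mid \mathfrak{m}\eta\subset N\}$. *)

theory Defs
  imports Main
begin

text \<open>Variables x_i are indexed by a finite type 'n (so n = CARD('n)).
  A term 1/x^(alpha+1) is identified with its exponent alpha :: 'n => nat.
  An element of E is a finitely supported coefficient function on terms;
  a power series in S = K[[x]] is an arbitrary coefficient function on monomials.\<close>

type_synonym 'n expo = "'n \<Rightarrow> nat"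
type_synonym ('n,'k) inj_hull = "'n expo \<Rightarrow> 'k"
type_synonym ('n,'k) pseries = "'n expo \<Rightarrow> 'k"

definition inE :: "('n,'k::zero) inj_hull \<Rightarrow> bool" where
  "inE \<eta> \<longleftrightarrow> finite {\<alpha>. \<eta> \<alpha> \<noteq> 0}"

definition Eset :: "('n,'k::zero) inj_hull set" where
  "Eset = {\<eta>. inE \<eta>}"

text \<open>S-action: x^gamma * 1/x^(beta+1) = 1/x^(beta-gamma+1) if beta >= gamma, else 0,
  extended bilinearly; the coefficient at delta of f*eta is sum_gamma f(gamma) eta(delta+gamma).\<close>
definition act :: "('n,'k::comm_ring_1) pseries \<Rightarrow> ('n,'k) inj_hull \<Rightarrow> ('n,'k) inj_hull" where
  "act f \<eta> = (\<lambda>\<delta>. \<Sum>\<gamma>\<in>{\<gamma>. \<eta> (\<lambda>j. \<delta> j + \<gamma> j) \<noteq> 0}. f \<gamma> * \<eta> (\<lambda>j. \<delta> j + \<gamma> j))"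

definition term_E :: "'n expo \<Rightarrow> ('n,'k::{zero,one}) inj_hull" where
  "term_E \<alpha> = (\<lambda>\<beta>. if \<beta> = \<alpha> then 1 else 0)"

definition xvar :: "'n \<Rightarrow> ('n,'k::{zero,one}) pseries" where
  "xvar i = (\<lambda>\<gamma>. if \<gamma> = (\<lambda>j. if j = i then 1 else 0) then 1 else 0)"

definition max_ideal :: "('n,'k::zero) pseries set" where
  "max_ideal = {f. f (\<lambda>_. 0) = 0}"

definition submodule_E :: "('n,'k::comm_ring_1) inj_hull set \<Rightarrow> bool" where
  "submodule_E N \<longleftrightarrow> N \<subseteq> Eset \<and> (\<lambda>_. 0) \<in> N
     \<and> (\<forall>\<eta>\<in>N. \<forall>\<eta>'\<in>N. (\<lambda>\<beta>. \<eta> \<beta> + \<eta>' \<beta>) \<in> N)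
     \<and> (\<forall>f. \<forall>\<eta>\<in>N. act f \<eta> \<in> N)"

definition gen_submodule :: "('n,'k::comm_ring_1) inj_hull set \<Rightarrow> ('n,'k) inj_hull set" where
  "gen_submodule A = \<Inter>{M. submodule_E M \<and> A \<subseteq> M}"

definition colon_m :: "('n,'k::comm_ring_1) inj_hull set \<Rightarrow> ('n,'k) inj_hull set" where
  "colon_m N = {\<eta>\<in>Eset. \<forall>f\<in>max_ideal. act f \<eta> \<in> N}"

text \<open>Term order, given as the non-strict order le on exponents (alpha <= beta iff
  1/x^(alpha+1) precedes-or-equals 1/x^(beta+1)).\<close>
definition term_order :: "('n expo \<Rightarrow> 'n expo \<Rightarrow> bool) \<Rightarrow> bool" where
  "term_order le \<longleftrightarrow>
     (\<forall>\<alpha>. le \<alpha> \<alpha>) \<and>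
     (\<forall>\<alpha> \<beta>. le \<alpha> \<beta> \<and> le \<beta> \<alpha> \<longrightarrow> \<alpha> = \<beta>) \<and>
     (\<forall>\<alpha> \<beta> \<gamma>. le \<alpha> \<beta> \<and> le \<beta> \<gamma> \<longrightarrow> le \<alpha> \<gamma>) \<and>
     (\<forall>\<alpha> \<beta>. le \<alpha> \<beta> \<or> le \<beta> \<alpha>) \<and>
     (\<forall>\<alpha>. le (\<lambda>_. 0) \<alpha>) \<and>
     (\<forall>\<alpha> \<beta> \<gamma>. le \<alpha> \<beta> \<and> \<alpha> \<noteq> \<beta> \<longrightarrow>
        le (\<lambda>j. \<alpha> j + \<gamma> j) (\<lambda>j. \<beta> j + \<gamma> j) \<and> (\<lambda>j. \<alpha> j + \<gamma> j) \<noteq> (\<lambda>j. \<beta> j + \<gamma> j))"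

definition LT :: "('n expo \<Rightarrow> 'n expo \<Rightarrow> bool) \<Rightarrow> ('n,'k::zero) inj_hull \<Rightarrow> 'n expo" where
  "LT le \<eta> = (THE \<alpha>. \<eta> \<alpha> \<noteq> 0 \<and> (\<forall>\<beta>. \<eta> \<beta> \<noteq> 0 \<longrightarrow> le \<beta> \<alpha>))"

definition LT_set :: "('n expo \<Rightarrow> 'n expo \<Rightarrow> bool) \<Rightarrow> ('n,'k::{zero,one}) inj_hull set \<Rightarrow> ('n,'k) inj_hull set" where
  "LT_set le N = {term_E (LT le \<eta>) | \<eta>. \<eta> \<in> N \<and> \<eta> \<noteq> (\<lambda>_. 0)}"

end

theory Submission
  imports Defs "HOL-Library.Function_Algebras" "HOL-Library.FuncSet"
begin

text \<open>Multiplication by x_i lowers the i-th exponent of every term of \<eta> and kills the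
  terms with exponent 0 there; since the term order is compatible with adding exponents, the
  leading term of x_i \<eta> is that of \<eta> lowered in the i-th place, provided that place is
  positive. As x_i \<eta> \<in> N, this shows x_i LT(\<eta>) \<in> LT(N) or x_i LT(\<eta>) = 0.
  For f in the maximal ideal every term of f LT(\<eta>) lies strictly below LT(\<eta>), hence below some
  x_i LT(\<eta>) \<noteq> 0, and so is a monomial multiple of an element of LT(N).\<close>

text \<open>Serves both as the monomial c x^a of S and as the element c/x^(a+1) of E.\<close>
definition single_coeff :: "'a \<Rightarrow> 'k::zero \<Rightarrow> 'a \<Rightarrow> 'k" where
  "single_coeff a c = (\<lambda>b. if b = a then c else 0)"

definition unit_expo :: "'n \<Rightarrow> 'n expo" where
  "unit_expo i = (\<lambda>j. if j = i then 1 else 0)"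

lemma term_E_eq_single_coeff: "term_E a = single_coeff a 1"
  by (simp add: term_E_def single_coeff_def)

lemma xvar_eq_single_coeff: "xvar i = single_coeff (unit_expo i) 1"
  by (simp add: xvar_def single_coeff_def unit_expo_def)

lemma act_eq_sum:
  "act f \<eta> = (\<lambda>\<delta>. \<Sum>\<gamma>\<in>{\<gamma>. \<eta> (\<delta> + \<gamma>) \<noteq> 0}. f \<gamma> * \<eta> (\<delta> + \<gamma>))"
  unfolding act_def plus_fun_def ..

lemma expo_add_eq_iff: "\<delta> + \<gamma> = a \<longleftrightarrow> \<delta> \<le> a \<and> \<gamma> = a - (\<delta> :: 'n expo)"
proof -
  have "\<And>j. \<delta> j + \<gamma> j = a j \<longleftrightarrow> \<delta> j \<le> a j \<and> \<gamma> j = a j - \<delta> j"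
    by arith
  then show ?thesis
    by (simp add: fun_eq_iff le_fun_def all_conj_distrib)
qed

lemma act_single_coeff_right:
  "act f (single_coeff a d) = (\<lambda>\<delta>. if \<delta> \<le> a then f (a - \<delta>) * d else 0)"
proof
  fix \<delta> :: "'a expo"
  have support: "{\<gamma>. single_coeff a d (\<delta> + \<gamma>) \<noteq> 0} = (if d = 0 \<or> \<not> \<delta> \<le> a then {} else {a - \<delta>})"
    by (auto simp: single_coeff_def expo_add_eq_iff)
  have "\<delta> \<le> a \<Longrightarrow> \<delta> + (a - \<delta>) = a"
    using expo_add_eq_iff by blast
  then show "act f (single_coeff a d) \<delta> = (if \<delta> \<le> a then f (a - \<delta>) * d else 0)"
    unfolding act_eq_sum support by (simp add: single_coeff_def)
qed

lemma act_single_coeff_single_coeff: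
  "act (single_coeff \<gamma> c) (single_coeff a d :: ('n, 'k::comm_ring_1) inj_hull) =
     (if \<gamma> \<le> a then single_coeff (a - \<gamma>) (c * d) else (\<lambda>_. 0))"
proof -
  have "\<delta> \<le> a \<and> a - \<delta> = \<gamma> \<longleftrightarrow> \<gamma> \<le> a \<and> \<delta> = a - \<gamma>" for \<delta>
    using expo_add_eq_iff[of \<delta> \<gamma> a] expo_add_eq_iff[of \<gamma> \<delta> a] by (auto simp: add.commute)
  then show ?thesis
    unfolding act_single_coeff_right by (intro ext) (auto simp: single_coeff_def)
qed

lemma act_single_coeff_left:
  assumes "inE \<eta>"
  shows "act (single_coeff \<gamma> c) \<eta> = (\<lambda>\<delta>. c * \<eta> (\<delta> + \<gamma>))"
proof
  fix \<delta> :: "'a expo"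
  let ?S = "{\<gamma>. \<eta> (\<delta> + \<gamma>) \<noteq> 0}"
  have "inj ((+) \<delta>)"
    by (rule injI) simp
  then have "finite ((+) \<delta> -` {\<alpha>. \<eta> \<alpha> \<noteq> 0})"
    using assms by (intro finite_vimageI) (simp_all add: inE_def)
  then have "finite ?S"
    by (simp add: vimage_def)
  have "act (single_coeff \<gamma> c) \<eta> \<delta> = (\<Sum>\<gamma>'\<in>?S. if \<gamma>' = \<gamma> then c * \<eta> (\<delta> + \<gamma>) else 0)"
    unfolding act_eq_sum by (intro sum.cong) (auto simp: single_coeff_def)
  also have "\<dots> = c * \<eta> (\<delta> + \<gamma>)"
    using \<open>finite ?S\<close> by (simp add: sum.delta)
  finally show "act (single_coeff \<gamma> c) \<eta> \<delta> = c * \<eta> (\<delta> + \<gamma>)" .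
qed

lemma term_order_refl: "term_order le \<Longrightarrow> le a a"
  unfolding term_order_def by blast

lemma term_order_antisym: "term_order le \<Longrightarrow> le a b \<Longrightarrow> le b a \<Longrightarrow> a = b"
  unfolding term_order_def by blast

lemma term_order_trans: "term_order le \<Longrightarrow> le a b \<Longrightarrow> le b c \<Longrightarrow> le a c"
  unfolding term_order_def by blast

lemma term_order_total: "term_order le \<Longrightarrow> le a b \<or> le b a"
  unfolding term_order_def by blast

lemma term_order_add_strict_mono:
  assumes "term_order le" "le a b" "a \<noteq> b"
  shows "le (a + c) (b + c)"
proof -
  have "le (\<lambda>j. a j + c j) (\<lambda>j. b j + c j)"
    using assms unfolding term_order_def by (elim conjE) (metis (no_types, lifting))
  then show ?thesis
    unfolding plus_fun_def .
qed

lemma term_order_add_cancel: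
  assumes le: "term_order le" and "le (a + c) (b + c)"
  shows "le a b"
proof (rule ccontr)
  assume "\<not> le a b"
  then have "le b a" "b \<noteq> a"
    using term_order_total[OF le] term_order_refl[OF le] by auto
  then have "le (b + c) (a + c)"
    by (rule term_order_add_strict_mono[OF le])
  with le assms(2) have "a + c = b + c"
    by (intro term_order_antisym)
  then show False
    using \<open>b \<noteq> a\<close> by simp
qed

lemma term_order_finite_has_greatest:
  assumes le: "term_order le" and "finite S" "S \<noteq> {}"
  shows "\<exists>a\<in>S. \<forall>b\<in>S. le b a"
  using assms(2,3)
proof (induction S rule: finite_ne_induct)
  case (singleton x)
  then show ?case using term_order_refl[OF le] by auto
next
  case (insert x F)
  then obtain a where "a \<in> F" "\<forall>b\<in>F. le b a" by auto
  then show ?case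
    using term_order_total[OF le] term_order_trans[OF le] term_order_refl[OF le] by blast
qed

lemma LT_eqI:
  assumes le: "term_order le" and "\<eta> a \<noteq> 0" "\<And>\<beta>. \<eta> \<beta> \<noteq> 0 \<Longrightarrow> le \<beta> a"
  shows "LT le \<eta> = a"
  unfolding LT_def using assms term_order_antisym[OF le] by (intro the_equality) blast+

lemma LT_spec:
  assumes le: "term_order le" and "inE \<eta>" "\<eta> \<noteq> (\<lambda>_. 0)"
  shows LT_coeff_nonzero: "\<eta> (LT le \<eta>) \<noteq> 0"
    and LT_greatest: "\<eta> \<beta> \<noteq> 0 \<Longrightarrow> le \<beta> (LT le \<eta>)"
proof -
  have "finite {\<alpha>. \<eta> \<alpha> \<noteq> 0}" "{\<alpha>. \<eta> \<alpha> \<noteq> 0} \<noteq> {}"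
    using assms by (auto simp: inE_def)
  then obtain a where "a \<in> {\<alpha>. \<eta> \<alpha> \<noteq> 0}" "\<forall>\<beta>\<in>{\<alpha>. \<eta> \<alpha> \<noteq> 0}. le \<beta> a"
    by (metis term_order_finite_has_greatest[OF le])
  then have a: "\<eta> a \<noteq> 0" "\<And>\<beta>. \<eta> \<beta> \<noteq> 0 \<Longrightarrow> le \<beta> a"
    by simp_all
  show "\<eta> (LT le \<eta>) \<noteq> 0" and "\<eta> \<beta> \<noteq> 0 \<Longrightarrow> le \<beta> (LT le \<eta>)"
    using a LT_eqI[of le \<eta> a] le by simp_all
qed

lemma LT_act_single_coeff:
  fixes \<eta> :: "('n, 'k::idom) inj_hull"
  assumes le: "term_order le" and \<eta>: "inE \<eta>" "\<eta> \<noteq> (\<lambda>_. 0)"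
    and \<gamma>: "\<gamma> \<le> LT le \<eta>" and "c \<noteq> 0"
  shows "act (single_coeff \<gamma> c) \<eta> \<noteq> (\<lambda>_. 0)"
    and "LT le (act (single_coeff \<gamma> c) \<eta>) = LT le \<eta> - \<gamma>"
proof -
  let ?\<alpha> = "LT le \<eta>"
  have shift: "act (single_coeff \<gamma> c) \<eta> = (\<lambda>\<delta>. c * \<eta> (\<delta> + \<gamma>))"
    by (rule act_single_coeff_left[OF \<eta>(1)])
  have restore: "(?\<alpha> - \<gamma>) + \<gamma> = ?\<alpha>"
    using \<gamma> by (simp add: fun_eq_iff le_fun_def)
  have top: "act (single_coeff \<gamma> c) \<eta> (?\<alpha> - \<gamma>) \<noteq> 0"
    unfolding shift restore using \<open>c \<noteq> 0\<close> LT_coeff_nonzero[OF le \<eta>] by simp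
  then show "act (single_coeff \<gamma> c) \<eta> \<noteq> (\<lambda>_. 0)"
    by auto
  have greatest: "le \<beta> (?\<alpha> - \<gamma>)" if "act (single_coeff \<gamma> c) \<eta> \<beta> \<noteq> 0" for \<beta>
  proof -
    have "le (\<beta> + \<gamma>) ((?\<alpha> - \<gamma>) + \<gamma>)"
      using that LT_greatest[OF le \<eta>] unfolding shift restore by simp
    then show ?thesis
      by (rule term_order_add_cancel[OF le])
  qed
  show "LT le (act (single_coeff \<gamma> c) \<eta>) = ?\<alpha> - \<gamma>"
    by (rule LT_eqI[of le "act (single_coeff \<gamma> c) \<eta>" "?\<alpha> - \<gamma>", OF le top greatest])
qed

lemma submodule_E_zero: "submodule_E M \<Longrightarrow> (\<lambda>_. 0) \<in> M"
  unfolding submodule_E_def by blast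

lemma submodule_E_add: "submodule_E M \<Longrightarrow> \<phi> \<in> M \<Longrightarrow> \<psi> \<in> M \<Longrightarrow> (\<lambda>\<beta>. \<phi> \<beta> + \<psi> \<beta>) \<in> M"
  unfolding submodule_E_def by blast

lemma submodule_E_act: "submodule_E M \<Longrightarrow> \<phi> \<in> M \<Longrightarrow> act f \<phi> \<in> M"
  unfolding submodule_E_def by blast

lemma submodule_E_single_coeff_below:
  assumes M: "submodule_E M" and "term_E a \<in> M" and "b \<le> a"
  shows "single_coeff b c \<in> M"
proof -
  have "act (single_coeff (a - b) c) (term_E a) = single_coeff b c"
    using \<open>b \<le> a\<close> by (simp add: term_E_eq_single_coeff act_single_coeff_single_coeff le_fun_def fun_diff_def)
  then show ?thesis
    using submodule_E_act[OF M \<open>term_E a \<in> M\<close>, of "single_coeff (a - b) c"] by simp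
qed

lemma submodule_E_finite_support:
  assumes M: "submodule_E M" and "finite {\<delta>. \<phi> \<delta> \<noteq> 0}"
    and "\<And>\<delta>. \<phi> \<delta> \<noteq> 0 \<Longrightarrow> single_coeff \<delta> (\<phi> \<delta>) \<in> M"
  shows "\<phi> \<in> M"
proof -
  have "\<phi> \<in> M" if "finite A" "{\<delta>. \<phi> \<delta> \<noteq> 0} \<subseteq> A" "\<And>\<delta>. \<phi> \<delta> \<noteq> 0 \<Longrightarrow> single_coeff \<delta> (\<phi> \<delta>) \<in> M"
    for A \<phi>
    using that
  proof (induction A arbitrary: \<phi> rule: finite_induct)
    case empty
    then show ?case using submodule_E_zero[OF M] by (simp add: fun_eq_iff)
  next
    case (insert b A)
    have "\<phi>(b := 0) \<in> M"
    proof (rule insert.IH)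
      show "{\<delta>. (\<phi>(b := 0)) \<delta> \<noteq> 0} \<subseteq> A"
        using insert.prems(1) by auto
      show "single_coeff \<delta> ((\<phi>(b := 0)) \<delta>) \<in> M" if "(\<phi>(b := 0)) \<delta> \<noteq> 0" for \<delta>
        using that insert.prems(2)[of \<delta>] by (simp split: if_splits)
    qed
    moreover have "single_coeff b (\<phi> b) \<in> M"
      using insert.prems(2) submodule_E_zero[OF M] by (cases "\<phi> b = 0") (simp_all add: single_coeff_def)
    ultimately have "(\<lambda>\<beta>. (\<phi>(b := 0)) \<beta> + single_coeff b (\<phi> b) \<beta>) \<in> M"
      by (rule submodule_E_add[OF M])
    moreover have "(\<lambda>\<beta>. (\<phi>(b := 0)) \<beta> + single_coeff b (\<phi> b) \<beta>) = \<phi>"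
      by (rule ext) (simp add: single_coeff_def)
    ultimately show ?case
      by simp
  qed
  then show ?thesis
    using assms by blast
qed

lemma gen_submodule_memI:
  "(\<And>M. submodule_E M \<Longrightarrow> A \<subseteq> M \<Longrightarrow> \<phi> \<in> M) \<Longrightarrow> \<phi> \<in> gen_submodule A"
  unfolding gen_submodule_def by blast

lemma finite_expo_below: "finite {\<delta> :: ('n::finite) expo. \<delta> \<le> a}"
proof (rule finite_subset)
  show "{\<delta>. \<delta> \<le> a} \<subseteq> Pi\<^sub>E UNIV (\<lambda>j. {0..a j})"
    by (auto simp: le_fun_def PiE_def extensional_def)
qed (simp add: finite_PiE)

lemma less_expo_le_minus_unit_expo:
  assumes "\<delta> < (a :: 'n expo)"
  obtains i where "unit_expo i \<le> a" and "\<delta> \<le> a - unit_expo i"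
proof -
  obtain i where "\<delta> i < a i"
    using assms by (auto simp: less_fun_def le_fun_def not_le)
  then have "unit_expo i \<le> a" "\<delta> \<le> a - unit_expo i"
    using assms by (auto simp: less_fun_def le_fun_def unit_expo_def)
  then show thesis by (rule that)
qed

lemma xvar_in_max_ideal: "xvar i \<in> max_ideal"
  by (auto simp: max_ideal_def xvar_def fun_eq_iff)

lemma term_LT_minus_unit_expo_in_LT_set:
  fixes \<eta> :: "('n, 'k::idom) inj_hull"
  assumes le: "term_order le" and \<eta>: "\<eta> \<in> colon_m N" "\<eta> \<noteq> (\<lambda>_. 0)"
    and i: "unit_expo i \<le> LT le \<eta>"
  shows "term_E (LT le \<eta> - unit_expo i) \<in> LT_set le N"
proof -
  let ?\<zeta> = "act (xvar i) \<eta>"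
  have "inE \<eta>"
    using \<eta>(1) by (simp add: colon_m_def Eset_def)
  have "?\<zeta> \<in> N"
    using \<eta>(1) xvar_in_max_ideal[of i] unfolding colon_m_def by blast
  moreover have "?\<zeta> \<noteq> (\<lambda>_. 0)" and LT_\<zeta>: "LT le ?\<zeta> = LT le \<eta> - unit_expo i"
    using LT_act_single_coeff[OF le \<open>inE \<eta>\<close> \<eta>(2) i] by (simp_all add: xvar_eq_single_coeff)
  ultimately have "term_E (LT le ?\<zeta>) \<in> LT_set le N"
    unfolding LT_set_def by blast
  then show ?thesis
    unfolding LT_\<zeta> .
qed

lemma act_max_ideal_term_LT_in_submodule:
  fixes \<eta> :: "('n::finite, 'k::idom) inj_hull" and f :: "('n, 'k) pseries"
  assumes le: "term_order le" and \<eta>: "\<eta> \<in> colon_m N" "\<eta> \<noteq> (\<lambda>_. 0)"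
    and M: "submodule_E M" "LT_set le N \<subseteq> M" and f: "f \<in> max_ideal"
  shows "act f (term_E (LT le \<eta>)) \<in> M"
proof (rule submodule_E_finite_support[OF M(1)])
  let ?\<alpha> = "LT le \<eta>" and ?\<phi> = "act f (term_E (LT le \<eta>))"
  have \<phi>: "?\<phi> = (\<lambda>\<delta>. if \<delta> \<le> ?\<alpha> then f (?\<alpha> - \<delta>) else 0)"
    by (rule ext) (simp add: term_E_eq_single_coeff act_single_coeff_right)
  show "finite {\<delta>. ?\<phi> \<delta> \<noteq> 0}"
    by (rule finite_subset[OF _ finite_expo_below[of ?\<alpha>]]) (auto simp: \<phi> split: if_splits)
  fix \<delta> assume "?\<phi> \<delta> \<noteq> 0"
  then have "\<delta> \<le> ?\<alpha>" and f_nonzero: "f (?\<alpha> - \<delta>) \<noteq> 0"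
    by (simp_all add: \<phi> split: if_splits)
  moreover have "\<delta> \<noteq> ?\<alpha>"
  proof
    assume "\<delta> = ?\<alpha>"
    then have "?\<alpha> - \<delta> = (\<lambda>_. 0)"
      by (simp add: fun_eq_iff)
    with f f_nonzero show False
      by (simp add: max_ideal_def)
  qed
  ultimately have "\<delta> < ?\<alpha>"
    by (simp add: less_le)
  then obtain i where "unit_expo i \<le> ?\<alpha>" "\<delta> \<le> ?\<alpha> - unit_expo i"
    by (rule less_expo_le_minus_unit_expo)
  then show "single_coeff \<delta> (?\<phi> \<delta>) \<in> M"
    using term_LT_minus_unit_expo_in_LT_set[OF le \<eta>] M(2)
    by (blast intro: submodule_E_single_coeff_below[OF M(1)])
qed

theorem lemma3p5:
  fixes le :: "('n::finite) expo \<Rightarrow> 'n expo \<Rightarrow> bool"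
    and N :: "('n, 'k::field) inj_hull set"
    and \<eta> :: "('n, 'k) inj_hull"
  assumes "term_order le"
    and "submodule_E N"
    and "\<eta> \<in> colon_m N"
    and "\<eta> \<noteq> (\<lambda>_. 0)"
  shows "(term_E (LT le \<eta>) :: ('n,'k) inj_hull) \<in> colon_m (gen_submodule (LT_set le N))
    \<and> (\<forall>i. act (xvar i) (term_E (LT le \<eta>)) = (\<lambda>_. (0::'k))
           \<or> act (xvar i) (term_E (LT le \<eta>)) \<in> LT_set le N)"
proof
  have "term_E (LT le \<eta>) \<in> Eset"
    by (simp add: Eset_def inE_def term_E_def)
  then show "(term_E (LT le \<eta>) :: ('n,'k) inj_hull) \<in> colon_m (gen_submodule (LT_set le N))"
    using act_max_ideal_term_LT_in_submodule[OF assms(1,3,4)]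
    by (auto simp: colon_m_def intro: gen_submodule_memI)
  show "\<forall>i. act (xvar i) (term_E (LT le \<eta>)) = (\<lambda>_. (0::'k))
           \<or> act (xvar i) (term_E (LT le \<eta>)) \<in> LT_set le N"
    using term_LT_minus_unit_expo_in_LT_set[OF assms(1,3,4)]
    by (simp add: xvar_eq_single_coeff term_E_eq_single_coeff act_single_coeff_single_coeff)
qed

end
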